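(* Let $\mathbf a=(a_1,\dots,a_k)$ be a sequence of nonnegative integers and $1\le j\le k$. There is a bijection between $D_j(a_1,\dots,a_k)$ and $D_j^*(a_1,\dots,a_{j-1},a_j+1,a_{j+1},\dots,a_k)$.
   Context: For $\mathbf a=(a_1,\dots,a_k)$ with nonnegative integer entries summing to $n$, put $c_0=0$, $c_j=a_1+\dots+a_j$, and let the $j$-th block be $A_j=\{c_{j-1}+1,\dots,c_j\}$. Let $S_{\mathbf a}\subseteq S_n$ be the set of permutations $\pi$ of $[n]$ with $\pi_i>\pi_{i+1}$ whenever $i,i+1$ lie in the same block. A fixed point is an $i$ with $\pi_i=i$. $D_j(\mathbf a)$ is the set of permutations in $S_{\mathbf a}$ with no fixed point in $A_1\cup\dots\cup A_j$; $D^*_j(\mathbf a)$ is the set of permutations in $S_{\mathbf a}$ with no fixed point in $A_1\cup\dots\cup A_{j-1}$ but with a fixed point in $A_j$. *)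

theory Defs
  imports "HOL-Combinatorics.Permutations"
begin

text \<open>A composition a = (a_1,...,a_k) is a list of naturals; blocks are 1-indexed.\<close>

definition partsum :: "nat list \<Rightarrow> nat \<Rightarrow> nat" where
  "partsum a j = sum_list (take j a)"

definition block :: "nat list \<Rightarrow> nat \<Rightarrow> nat set" where
  "block a j = {partsum a (j - 1) + 1 .. partsum a j}"

definition same_block :: "nat list \<Rightarrow> nat \<Rightarrow> nat \<Rightarrow> bool" where
  "same_block a i i' \<longleftrightarrow> (\<exists>j\<in>{1..length a}. i \<in> block a j \<and> i' \<in> block a j)"

definition Sa :: "nat list \<Rightarrow> (nat \<Rightarrow> nat) set" where
  "Sa a = {\<pi>. \<pi> permutes {1..sum_list a} \<and>
              (\<forall>i. same_block a i (i + 1) \<longrightarrow> \<pi> i > \<pi> (i + 1))}"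

definition Dj :: "nat \<Rightarrow> nat list \<Rightarrow> (nat \<Rightarrow> nat) set" where
  "Dj j a = {\<pi> \<in> Sa a. \<forall>l\<in>{1..j}. \<forall>i\<in>block a l. \<pi> i \<noteq> i}"

definition Djstar :: "nat \<Rightarrow> nat list \<Rightarrow> (nat \<Rightarrow> nat) set" where
  "Djstar j a = {\<pi> \<in> Sa a. (\<forall>l\<in>{1..<j}. \<forall>i\<in>block a l. \<pi> i \<noteq> i)
                           \<and> (\<exists>i\<in>block a j. \<pi> i = i)}"

end

theory Submission
  imports Defs
begin

text \<open>Within a block, a permutation in \<open>S_a\<close> is decreasing, so there it crosses the diagonal
  at most once. For \<open>\<pi> \<in> D_j(a)\<close> there is no fixed point in block \<open>j\<close>, hence a first position
  \<open>p\<close> of that block, or the position just after it, from which on \<open>\<pi>\<close> lies below the diagonal.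
  Inserting a new fixed point at \<open>p\<close> (shifting larger positions and values up by one) makes
  block \<open>j\<close> a decreasing run one longer, with \<open>p\<close> as its only fixed point, and leaves the
  earlier blocks fixed-point free. Conversely, deleting the unique fixed point of the enlarged
  block \<open>j\<close> recovers \<open>\<pi>\<close>.\<close>

definition shift_up :: "nat \<Rightarrow> nat \<Rightarrow> nat" where
  "shift_up p v = (if v < p then v else Suc v)"

definition shift_down :: "nat \<Rightarrow> nat \<Rightarrow> nat" where
  "shift_down p v = (if v < p then v else v - 1)"

definition insert_fixpoint :: "nat \<Rightarrow> (nat \<Rightarrow> nat) \<Rightarrow> nat \<Rightarrow> nat" where
  "insert_fixpoint p f x = (if x = p then p else shift_up p (f (shift_down p x)))"

definition remove_fixpoint :: "nat \<Rightarrow> (nat \<Rightarrow> nat) \<Rightarrow> nat \<Rightarrow> nat" where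
  "remove_fixpoint p g = shift_down p \<circ> g \<circ> shift_up p"

lemma shift_up_neq [simp]: "shift_up p v \<noteq> p"
  by (simp add: shift_up_def)

lemma shift_up_less_iff [simp]: "shift_up p v < shift_up p w \<longleftrightarrow> v < w"
  by (auto simp: shift_up_def)

lemma shift_up_eq_iff [simp]: "shift_up p v = shift_up p w \<longleftrightarrow> v = w"
  by (auto simp: shift_up_def)

lemma shift_down_shift_up [simp]: "shift_down p (shift_up p v) = v"
  by (simp add: shift_up_def shift_down_def)

lemma shift_up_shift_down: "v \<noteq> p \<Longrightarrow> shift_up p (shift_down p v) = v"
  by (auto simp: shift_up_def shift_down_def)

lemma shift_down_strict_mono: "v \<noteq> p \<Longrightarrow> w \<noteq> p \<Longrightarrow> v < w \<Longrightarrow> shift_down p v < shift_down p w"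
  by (auto simp: shift_down_def)

lemma insert_fixpoint_at [simp]: "insert_fixpoint p f p = p"
  by (simp add: insert_fixpoint_def)

lemma insert_fixpoint_off:
  "x \<noteq> p \<Longrightarrow> insert_fixpoint p f x = shift_up p (f (shift_down p x))"
  by (simp add: insert_fixpoint_def)

lemma remove_fixpoint_apply: "remove_fixpoint p g x = shift_down p (g (shift_up p x))"
  by (simp add: remove_fixpoint_def)

lemma remove_insert_fixpoint [simp]: "remove_fixpoint p (insert_fixpoint p f) = f"
  by (rule ext) (simp add: remove_fixpoint_apply insert_fixpoint_off)

lemma insert_remove_fixpoint:
  assumes "inj g" "g p = p"
  shows "insert_fixpoint p (remove_fixpoint p g) = g"
proof
  fix x
  show "insert_fixpoint p (remove_fixpoint p g) x = g x"
  proof (cases "x = p")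
    case False
    then have "g x \<noteq> p" using assms by (metis injD)
    then show ?thesis
      using False by (simp add: insert_fixpoint_off remove_fixpoint_apply shift_up_shift_down)
  qed (simp add: assms(2))
qed

lemma insert_fixpoint_fixed_iff:
  "x \<noteq> p \<Longrightarrow> insert_fixpoint p f x = x \<longleftrightarrow> f (shift_down p x) = shift_down p x"
  by (metis insert_fixpoint_off shift_up_eq_iff shift_up_shift_down)

lemma remove_fixpoint_fixed_iff:
  "g (shift_up p x) \<noteq> p \<Longrightarrow> remove_fixpoint p g x = x \<longleftrightarrow> g (shift_up p x) = shift_up p x"
  by (metis remove_fixpoint_apply shift_down_shift_up shift_up_shift_down)

lemma insert_fixpoint_inj:
  assumes "inj f"
  shows "inj (insert_fixpoint p f)"
proof (rule injI)
  fix x y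
  assume eq: "insert_fixpoint p f x = insert_fixpoint p f y"
  show "x = y"
  proof (cases "x = p \<or> y = p")
    case True
    then show ?thesis using eq by (metis insert_fixpoint_at insert_fixpoint_off shift_up_neq)
  next
    case False
    then have "f (shift_down p x) = f (shift_down p y)"
      using eq by (simp add: insert_fixpoint_off)
    then have "shift_down p x = shift_down p y" using assms by (simp add: inj_eq)
    then show ?thesis using False by (metis shift_up_shift_down)
  qed
qed

lemma insert_fixpoint_permutes:
  assumes f: "f permutes {1..m}" and p: "1 \<le> p" "p \<le> Suc m"
  shows "insert_fixpoint p f permutes {1..Suc m}"
proof (rule inj_imp_permutes)
  show "inj_on (insert_fixpoint p f) {1..Suc m}"
    using insert_fixpoint_inj[OF permutes_inj[OF f]] by (rule inj_on_subset) simp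
  show "insert_fixpoint p f x = x" if "x \<notin> {1..Suc m}" for x
  proof -
    have "shift_down p x \<notin> {1..m}" using that p by (auto simp: shift_down_def)
    then have "f (shift_down p x) = shift_down p x" using f by (simp add: permutes_not_in)
    then show ?thesis
      using that p by (auto simp: insert_fixpoint_fixed_iff)
  qed
  show "insert_fixpoint p f x \<in> {1..Suc m}" if "x \<in> {1..Suc m}" for x
  proof (cases "x = p")
    case False
    then have "shift_down p x \<in> {1..m}" using that p by (auto simp: shift_down_def)
    then have "f (shift_down p x) \<in> {1..m}" by (simp only: permutes_in_image[OF f])
    then show ?thesis using False p by (auto simp: insert_fixpoint_off shift_up_def)
  qed (use p in simp)
qed simp

lemma remove_fixpoint_permutes:
  assumes g: "g permutes {1..Suc m}" and p: "p \<in> {1..Suc m}" "g p = p"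
  shows "remove_fixpoint p g permutes {1..m}"
proof (rule inj_imp_permutes)
  have off_p: "g (shift_up p x) \<noteq> p" for x
    using permutes_inj[OF g] p(2) by (metis injD shift_up_neq)
  show "inj_on (remove_fixpoint p g) {1..m}"
  proof (rule inj_onI)
    fix x y
    assume "remove_fixpoint p g x = remove_fixpoint p g y"
    then have "g (shift_up p x) = g (shift_up p y)"
      using off_p by (metis remove_fixpoint_apply shift_up_shift_down)
    then show "x = y" using permutes_inj[OF g] by (simp add: inj_eq)
  qed
  show "remove_fixpoint p g x = x" if "x \<notin> {1..m}" for x
  proof -
    have "shift_up p x \<notin> {1..Suc m}" using that p by (auto simp: shift_up_def)
    then show ?thesis using g off_p by (simp add: permutes_not_in remove_fixpoint_fixed_iff)
  qed
  show "remove_fixpoint p g x \<in> {1..m}" if "x \<in> {1..m}" for x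
  proof -
    have "shift_up p x \<in> {1..Suc m}" using that p by (auto simp: shift_up_def)
    then have "g (shift_up p x) \<in> {1..Suc m}" by (simp only: permutes_in_image[OF g])
    then show ?thesis using off_p[of x] p by (auto simp: remove_fixpoint_apply shift_down_def)
  qed
qed simp

lemma partsum_mono: "k \<le> m \<Longrightarrow> partsum b k \<le> partsum b m"
  by (metis le_add1 le_add_diff_inverse partsum_def sum_list_append take_add)

lemma partsum_le_sum_list: "partsum b k \<le> sum_list b"
  unfolding partsum_def by (metis append_take_drop_id le_add1 sum_list_append)

lemma same_block_Suc_iff:
  "same_block b y (Suc y) \<longleftrightarrow>
     (\<exists>l\<in>{1..length b}. partsum b (l - 1) < y \<and> Suc y \<le> partsum b l)"
  unfolding same_block_def block_def by (auto; force)

text \<open>Position \<open>partsum b k + 1\<close> starts the next block, so a pair \<open>y, y + 1\<close> in a common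
  block cannot straddle it.\<close>

lemma same_block_Suc_in_block:
  assumes "same_block b y (Suc y)" "1 \<le> k" "Suc y \<in> {partsum b (k - 1) + 1..partsum b k + 1}"
  shows "y \<in> block b k" "Suc y \<in> block b k"
proof -
  obtain l where l: "1 \<le> l" "partsum b (l - 1) < y" "Suc y \<le> partsum b l"
    using assms(1) unfolding same_block_Suc_iff by auto
  have "\<not> l \<le> k - 1" "\<not> k \<le> l - 1"
    using l assms partsum_mono[of l "k - 1" b] partsum_mono[of k "l - 1" b] by auto
  then have "l = k" by linarith
  then show "y \<in> block b k" "Suc y \<in> block b k" using l by (auto simp: block_def)
qed

lemma decreasing_run_bound:
  fixes f :: "nat \<Rightarrow> nat"
  assumes "\<And>z. x \<le> z \<Longrightarrow> z < y \<Longrightarrow> f (Suc z) < f z" and "x \<le> y"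
  shows "f y + (y - x) \<le> f x"
  using assms(2,1)
proof (induction y rule: dec_induct)
  case (step y)
  then have "f (Suc y) < f y" by simp
  with step show ?case by fastforce
qed simp

lemma Sa_descent_in_block:
  assumes "\<pi> \<in> Sa b" "k \<in> {1..length b}" "x \<in> block b k" "y \<in> block b k" "x \<le> y"
  shows "\<pi> y + (y - x) \<le> \<pi> x"
proof (rule decreasing_run_bound[OF _ assms(5)])
  fix z
  assume "x \<le> z" "z < y"
  then have "z \<in> block b k \<and> Suc z \<in> block b k" using assms(3,4) by (auto simp: block_def)
  then have "same_block b z (Suc z)" using assms(2) unfolding same_block_def by blast
  then show "\<pi> (Suc z) < \<pi> z" using assms(1) by (simp add: Sa_def)
qed

lemma Sa_block_fixpoint_unique:
  assumes "\<pi> \<in> Sa b" "k \<in> {1..length b}" "x \<in> block b k" "y \<in> block b k"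
    and "\<pi> x = x" "\<pi> y = y"
  shows "x = y"
  using Sa_descent_in_block[OF assms(1,2,3,4)] Sa_descent_in_block[OF assms(1,2,4,3)] assms(5,6)
  by (cases "x \<le> y") auto

locale enlarged_block =
  fixes a :: "nat list" and j :: nat
  assumes j_pos: "1 \<le> j" and j_le: "j \<le> length a"
begin

abbreviation "a' \<equiv> a[j - 1 := a ! (j - 1) + 1]"
abbreviation "lo \<equiv> partsum a (j - 1) + 1"
abbreviation "hi \<equiv> partsum a j"

lemma partsum_enlarged: "partsum a' k = partsum a k + (if j \<le> k then 1 else 0)"
proof (cases "j \<le> k")
  case True
  then have "j - 1 < length (take k a)" using j_pos j_le by (simp; linarith)
  then show ?thesis
    using True by (simp add: partsum_def take_update_swap sum_list_update)
next
  case False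
  then show ?thesis by (simp add: partsum_def take_update_swap list_update_beyond)
qed

lemma sum_list_enlarged: "sum_list a' = Suc (sum_list a)"
  using j_pos j_le by (simp add: sum_list_update)

lemma j_mem: "j \<in> {1..length a}"
  using j_pos j_le by simp

lemma j_mem_enlarged: "j \<in> {1..length a'}"
  using j_pos j_le by simp

lemma lo_pos: "1 \<le> lo" and lo_le_Suc_hi: "lo \<le> Suc hi" and hi_le: "hi \<le> sum_list a"
  using partsum_mono[of "j - 1" j a] partsum_le_sum_list[of a j] by auto

lemma block_j: "block a j = {lo..hi}"
  by (simp add: block_def)

lemma block_j_enlarged: "block a' j = {lo..Suc hi}"
proof -
  have "\<not> j \<le> j - 1" using j_pos by simp
  then show ?thesis unfolding block_def partsum_enlarged by simp
qed

lemma block_enlarged_below: "l < j \<Longrightarrow> block a' l = block a l"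
proof -
  assume "l < j"
  then have "\<not> j \<le> l - 1" "\<not> j \<le> l" by auto
  then show ?thesis unfolding block_def partsum_enlarged by simp
qed

lemma block_below_less_lo: "l < j \<Longrightarrow> i \<in> block a l \<Longrightarrow> i < lo"
proof -
  assume "l < j" "i \<in> block a l"
  then have "l \<le> j - 1" "i \<le> partsum a l" unfolding block_def by auto
  then show ?thesis using partsum_mono[of l "j - 1" a] by linarith
qed

lemma same_block_enlarged_below:
  assumes "Suc y \<le> hi"
  shows "same_block a' y (Suc y) \<longleftrightarrow> same_block a y (Suc y)"
proof -
  have "partsum a' (l - 1) < y \<and> Suc y \<le> partsum a' l \<longleftrightarrow>
        partsum a (l - 1) < y \<and> Suc y \<le> partsum a l" for l
  proof -
    have "j \<le> l - 1 \<Longrightarrow> Suc y \<le> partsum a (l - 1)" "j \<le> l \<Longrightarrow> Suc y \<le> partsum a l"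
      using assms partsum_mono[of j "l - 1" a] partsum_mono[of j l a] by auto
    then show ?thesis unfolding partsum_enlarged by auto
  qed
  then show ?thesis unfolding same_block_Suc_iff by simp
qed

lemma same_block_enlarged_above:
  assumes "lo \<le> y"
  shows "same_block a' (Suc y) (Suc (Suc y)) \<longleftrightarrow> same_block a y (Suc y)"
proof -
  have "partsum a' (l - 1) < Suc y \<and> Suc (Suc y) \<le> partsum a' l \<longleftrightarrow>
        partsum a (l - 1) < y \<and> Suc y \<le> partsum a l" for l
  proof -
    have below: "partsum a k < y" if "\<not> j \<le> k" for k
    proof -
      have "k \<le> j - 1" using that by simp
      then show ?thesis using assms partsum_mono[of k "j - 1" a] by simp
    qed
    show ?thesis
      using below[of "l - 1"] below[of l] unfolding partsum_enlarged by auto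
  qed
  then show ?thesis unfolding same_block_Suc_iff by simp
qed

lemma same_block_in_block_j:
  "same_block a y (Suc y) \<Longrightarrow> Suc y \<in> {lo..Suc hi} \<Longrightarrow> y \<in> {lo..hi} \<and> Suc y \<in> {lo..hi}"
  using same_block_Suc_in_block[of a y j] j_pos unfolding block_j by simp

lemma same_block_enlarged_in_block_j:
  assumes "same_block a' y (Suc y)" "Suc y \<in> {lo..Suc (Suc hi)}"
  shows "y \<in> {lo..Suc hi} \<and> Suc y \<in> {lo..Suc hi}"
proof -
  have "\<not> j \<le> j - 1" using j_pos by simp
  then show ?thesis
    using same_block_Suc_in_block[OF assms(1) j_pos] assms(2)
    unfolding block_j_enlarged partsum_enlarged by simp
qed

lemma Dj_in_Sa: "\<pi> \<in> Dj j a \<Longrightarrow> \<pi> \<in> Sa a"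
  by (simp add: Dj_def)

lemma Dj_no_fixpoint_in_block_j: "\<pi> \<in> Dj j a \<Longrightarrow> x \<in> {lo..hi} \<Longrightarrow> \<pi> x \<noteq> x"
  using j_pos unfolding Dj_def block_j[symmetric] by auto

text \<open>\<open>Suc hi\<close> is the default when \<open>\<pi>\<close> stays above the diagonal on the whole block.\<close>

definition insertion_point :: "(nat \<Rightarrow> nat) \<Rightarrow> nat" where
  "insertion_point \<pi> = (LEAST x. lo \<le> x \<and> (x = Suc hi \<or> \<pi> x < x))"

definition block_fixpoint :: "(nat \<Rightarrow> nat) \<Rightarrow> nat" where
  "block_fixpoint \<pi> = (THE x. x \<in> {lo..Suc hi} \<and> \<pi> x = x)"

lemma insertion_point_mem: "insertion_point \<pi> \<in> {lo..Suc hi}"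
proof -
  have "lo \<le> insertion_point \<pi>"
    unfolding insertion_point_def by (rule LeastI2[of _ "Suc hi"]) (use lo_le_Suc_hi in auto)
  moreover have "insertion_point \<pi> \<le> Suc hi"
    unfolding insertion_point_def by (rule Least_le) (use lo_le_Suc_hi in auto)
  ultimately show ?thesis by simp
qed

lemma below_diagonal_at_insertion_point:
  assumes "insertion_point \<pi> \<le> hi"
  shows "\<pi> (insertion_point \<pi>) < insertion_point \<pi>"
proof -
  have "lo \<le> Suc hi \<and> (Suc hi = Suc hi \<or> \<pi> (Suc hi) < Suc hi)" using lo_le_Suc_hi by simp
  then have "insertion_point \<pi> = Suc hi \<or> \<pi> (insertion_point \<pi>) < insertion_point \<pi>"
    unfolding insertion_point_def by (rule LeastI2) simp
  then show ?thesis using assms by simp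
qed

lemma above_diagonal_before_insertion_point:
  assumes "\<pi> \<in> Dj j a" "lo \<le> x" "x < insertion_point \<pi>"
  shows "x < \<pi> x"
proof -
  have "\<not> (lo \<le> x \<and> (x = Suc hi \<or> \<pi> x < x))"
    using assms(3) unfolding insertion_point_def by (rule not_less_Least)
  moreover have "x \<in> {lo..hi}" using assms(2,3) insertion_point_mem[of \<pi>] by auto
  ultimately show ?thesis using Dj_no_fixpoint_in_block_j[OF assms(1)] by fastforce
qed

lemma before_insertion_point:
  assumes "\<pi> \<in> Dj j a" "lo \<le> x" "x < insertion_point \<pi>"
  shows "insertion_point \<pi> \<le> \<pi> x"
proof -
  let ?p = "insertion_point \<pi>"
  have "?p - 1 \<in> {lo..hi}" using assms(2,3) insertion_point_mem[of \<pi>] by auto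
  then have "\<pi> (?p - 1) + (?p - 1 - x) \<le> \<pi> x"
    using Sa_descent_in_block[OF Dj_in_Sa[OF assms(1)] j_mem, of x "?p - 1", unfolded block_j]
      assms(2,3) by simp
  moreover have "?p - 1 < \<pi> (?p - 1)"
    using above_diagonal_before_insertion_point[OF assms(1)] assms(2,3) by simp
  ultimately show ?thesis by linarith
qed

lemma block_fixpoint_eq:
  assumes "\<pi> \<in> Sa a'" "x \<in> {lo..Suc hi}" "\<pi> x = x"
  shows "block_fixpoint \<pi> = x"
  unfolding block_fixpoint_def
proof (rule the_equality)
  fix y
  assume "y \<in> {lo..Suc hi} \<and> \<pi> y = y"
  then show "y = x"
    using Sa_block_fixpoint_unique[OF assms(1) j_mem_enlarged, unfolded block_j_enlarged] assms(2,3)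
    by simp
qed (use assms in simp)

lemma block_fixpoint_Djstar:
  assumes "\<pi> \<in> Djstar j a'"
  shows "block_fixpoint \<pi> \<in> {lo..Suc hi}" "\<pi> (block_fixpoint \<pi>) = block_fixpoint \<pi>"
proof -
  obtain x where "x \<in> {lo..Suc hi}" "\<pi> x = x"
    using assms unfolding Djstar_def block_j_enlarged by auto
  moreover have "\<pi> \<in> Sa a'" using assms by (simp add: Djstar_def)
  ultimately show "block_fixpoint \<pi> \<in> {lo..Suc hi}" "\<pi> (block_fixpoint \<pi>) = block_fixpoint \<pi>"
    using block_fixpoint_eq by auto
qed

lemma before_block_fixpoint:
  assumes "\<pi> \<in> Djstar j a'" "lo \<le> x" "x < block_fixpoint \<pi>"
  shows "block_fixpoint \<pi> < \<pi> x"
  using Sa_descent_in_block[of \<pi> a' j x "block_fixpoint \<pi>", unfolded block_j_enlarged]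
    assms block_fixpoint_Djstar[OF assms(1)] j_mem_enlarged by (auto simp: Djstar_def)

lemma after_block_fixpoint:
  assumes "\<pi> \<in> Djstar j a'" "block_fixpoint \<pi> < x" "x \<le> Suc hi"
  shows "\<pi> x < block_fixpoint \<pi>"
  using Sa_descent_in_block[of \<pi> a' j "block_fixpoint \<pi>" x, unfolded block_j_enlarged]
    assms block_fixpoint_Djstar[OF assms(1)] j_mem_enlarged by (auto simp: Djstar_def)

lemma insert_fixpoint_descents:
  assumes D: "\<pi> \<in> Dj j a" and adj: "same_block a' i (Suc i)"
  defines "p \<equiv> insertion_point \<pi>"
  shows "insert_fixpoint p \<pi> (Suc i) < insert_fixpoint p \<pi> i"
proof -
  have p: "p \<in> {lo..Suc hi}" unfolding p_def by (rule insertion_point_mem)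
  have descent: "same_block a y (Suc y) \<Longrightarrow> \<pi> (Suc y) < \<pi> y" for y
    using Dj_in_Sa[OF D] by (simp add: Sa_def)
  consider "Suc i < p" | "Suc i = p" | "i = p" | "p < i" by linarith
  then show ?thesis
  proof cases
    case 1
    then have "same_block a i (Suc i)" using same_block_enlarged_below adj p by simp
    then show ?thesis using 1 descent by (simp add: insert_fixpoint_off shift_down_def)
  next
    case 2
    then have "lo \<le> i" using same_block_enlarged_in_block_j[OF adj] p by simp
    then have "p \<le> \<pi> i" using before_insertion_point[OF D] 2 unfolding p_def by simp
    then show ?thesis using 2 by (simp add: insert_fixpoint_off shift_down_def shift_up_def)
  next
    case 3
    then have "p \<le> hi" using same_block_enlarged_in_block_j[OF adj] p by simp
    then have "\<pi> p < p" using below_diagonal_at_insertion_point unfolding p_def by simp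
    then show ?thesis using 3 by (simp add: insert_fixpoint_off shift_down_def shift_up_def)
  next
    case 4
    then obtain y where y: "i = Suc y" "p \<le> y" by (cases i) auto
    then have "same_block a y (Suc y)" using same_block_enlarged_above adj p by simp
    then show ?thesis using y descent by (simp add: insert_fixpoint_off shift_down_def)
  qed
qed

lemma insert_fixpoint_Djstar:
  assumes D: "\<pi> \<in> Dj j a"
  shows "insert_fixpoint (insertion_point \<pi>) \<pi> \<in> Djstar j a'"
proof -
  define p where "p = insertion_point \<pi>"
  have p: "p \<in> {lo..Suc hi}" unfolding p_def by (rule insertion_point_mem)
  have "insert_fixpoint p \<pi> permutes {1..sum_list a'}"
    unfolding sum_list_enlarged
    using insert_fixpoint_permutes Dj_in_Sa[OF D] p lo_pos hi_le by (simp add: Sa_def)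
  moreover have "insert_fixpoint p \<pi> (Suc i) < insert_fixpoint p \<pi> i" if "same_block a' i (Suc i)" for i
    using insert_fixpoint_descents[OF D that] unfolding p_def .
  moreover have "insert_fixpoint p \<pi> i \<noteq> i" if "l \<in> {1..<j}" "i \<in> block a' l" for l i
  proof -
    have l: "l < j" using that by simp
    then have i: "i \<in> block a l" using that(2) block_enlarged_below by simp
    moreover have "i < p" using block_below_less_lo[OF l i] p by simp
    ultimately show ?thesis
      using D that by (auto simp: insert_fixpoint_fixed_iff shift_down_def Dj_def)
  qed
  moreover have "p \<in> block a' j" using p unfolding block_j_enlarged .
  ultimately show ?thesis unfolding p_def Djstar_def Sa_def
    by (auto intro: bexI[of _ "insertion_point \<pi>"])
qed

lemma block_fixpoint_insert_fixpoint:
  "\<pi> \<in> Dj j a \<Longrightarrow> block_fixpoint (insert_fixpoint (insertion_point \<pi>) \<pi>) = insertion_point \<pi>"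
  using block_fixpoint_eq insert_fixpoint_Djstar insertion_point_mem by (simp add: Djstar_def)

lemma block_fixpoint_not_hit:
  assumes "\<pi> \<in> Djstar j a'" "x \<noteq> block_fixpoint \<pi>"
  shows "\<pi> x \<noteq> block_fixpoint \<pi>"
proof -
  have "inj \<pi>" using assms(1) by (auto simp: Djstar_def Sa_def intro: permutes_inj)
  then show ?thesis using block_fixpoint_Djstar(2)[OF assms(1)] assms(2) by (metis injD)
qed

lemma remove_fixpoint_descents:
  assumes D: "\<pi> \<in> Djstar j a'" and adj: "same_block a i (Suc i)"
  defines "q \<equiv> block_fixpoint \<pi>"
  shows "remove_fixpoint q \<pi> (Suc i) < remove_fixpoint q \<pi> i"
proof -
  have q: "q \<in> {lo..Suc hi}" unfolding q_def by (rule block_fixpoint_Djstar[OF D])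
  have off_q: "x \<noteq> q \<Longrightarrow> \<pi> x \<noteq> q" for x
    using block_fixpoint_not_hit[OF D] unfolding q_def .
  have descent: "same_block a' y (Suc y) \<Longrightarrow> \<pi> (Suc y) < \<pi> y" for y
    using D by (simp add: Djstar_def Sa_def)
  consider "Suc i < q" | "Suc i = q" | "q \<le> i" by linarith
  then show ?thesis
  proof cases
    case 1
    then have "same_block a' i (Suc i)" using same_block_enlarged_below adj q by simp
    then show ?thesis
      using 1 descent off_q by (simp add: remove_fixpoint_apply shift_up_def shift_down_strict_mono)
  next
    case 2
    then have i: "i \<in> {lo..hi}" "Suc i \<in> {lo..hi}" using same_block_in_block_j[OF adj] q by auto
    then have "q < \<pi> i" "\<pi> (Suc (Suc i)) < q"
      using before_block_fixpoint[OF D] after_block_fixpoint[OF D] 2 unfolding q_def by auto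
    then show ?thesis using 2 by (simp add: remove_fixpoint_apply shift_up_def shift_down_def)
  next
    case 3
    then have "same_block a' (Suc i) (Suc (Suc i))" using same_block_enlarged_above adj q by simp
    then show ?thesis
      using 3 descent off_q by (simp add: remove_fixpoint_apply shift_up_def shift_down_strict_mono)
  qed
qed

lemma remove_fixpoint_no_fixpoint:
  assumes D: "\<pi> \<in> Djstar j a'" and l: "l \<in> {1..j}" and i: "i \<in> block a l"
  defines "q \<equiv> block_fixpoint \<pi>"
  shows "remove_fixpoint q \<pi> i \<noteq> i"
proof -
  have q: "q \<in> {lo..Suc hi}" unfolding q_def by (rule block_fixpoint_Djstar[OF D])
  have "\<pi> (shift_up q i) \<noteq> shift_up q i"
  proof (cases "l < j")
    case True
    then have "i \<in> block a' l" "i < q"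
      using i q block_enlarged_below block_below_less_lo[OF True i] by auto
    then show ?thesis using D True l by (auto simp: Djstar_def shift_up_def)
  next
    case False
    then have "i \<in> {lo..hi}" using l i block_j by simp
    show ?thesis
    proof (cases "i < q")
      case True
      then have "q < \<pi> i" using before_block_fixpoint[OF D] \<open>i \<in> {lo..hi}\<close> q_def by simp
      then show ?thesis using True by (simp add: shift_up_def)
    next
      case False
      then have "\<pi> (Suc i) < q" using after_block_fixpoint[OF D] \<open>i \<in> {lo..hi}\<close> q_def by simp
      then show ?thesis using False by (simp add: shift_up_def)
    qed
  qed
  moreover have "\<pi> (shift_up q i) \<noteq> q"
    using block_fixpoint_not_hit[OF D] unfolding q_def by simp
  ultimately show ?thesis by (simp add: remove_fixpoint_fixed_iff)
qed

lemma remove_fixpoint_Dj: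
  assumes D: "\<pi> \<in> Djstar j a'"
  shows "remove_fixpoint (block_fixpoint \<pi>) \<pi> \<in> Dj j a"
proof -
  have "\<pi> permutes {1..Suc (sum_list a)}"
    using D sum_list_enlarged by (simp add: Djstar_def Sa_def)
  then have "remove_fixpoint (block_fixpoint \<pi>) \<pi> permutes {1..sum_list a}"
    using remove_fixpoint_permutes block_fixpoint_Djstar[OF D] lo_pos hi_le by simp
  then show ?thesis
    using remove_fixpoint_descents[OF D] remove_fixpoint_no_fixpoint[OF D]
    unfolding Dj_def Sa_def by simp
qed

lemma insertion_point_remove_fixpoint:
  assumes D: "\<pi> \<in> Djstar j a'"
  shows "insertion_point (remove_fixpoint (block_fixpoint \<pi>) \<pi>) = block_fixpoint \<pi>"
  unfolding insertion_point_def
proof (rule Least_equality)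
  let ?q = "block_fixpoint \<pi>"
  have q: "?q \<in> {lo..Suc hi}" by (rule block_fixpoint_Djstar[OF D])
  show "lo \<le> ?q \<and> (?q = Suc hi \<or> remove_fixpoint ?q \<pi> ?q < ?q)"
  proof (cases "?q = Suc hi")
    case False
    then have "\<pi> (Suc ?q) < ?q" using after_block_fixpoint[OF D] q by simp
    then show ?thesis using q by (simp add: remove_fixpoint_apply shift_up_def shift_down_def)
  qed (use q in simp)
  fix y
  assume y: "lo \<le> y \<and> (y = Suc hi \<or> remove_fixpoint ?q \<pi> y < y)"
  show "?q \<le> y"
  proof (rule ccontr)
    assume "\<not> ?q \<le> y"
    then have "?q < \<pi> y" "y < ?q" using before_block_fixpoint[OF D] y by auto
    then have "remove_fixpoint ?q \<pi> y = \<pi> y - 1" "y \<noteq> Suc hi"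
      using q by (simp_all add: remove_fixpoint_apply shift_up_def shift_down_def)
    then show False using y \<open>?q < \<pi> y\<close> \<open>y < ?q\<close> by linarith
  qed
qed

theorem bij_betw_insert_fixpoint:
  "bij_betw (\<lambda>\<pi>. insert_fixpoint (insertion_point \<pi>) \<pi>) (Dj j a) (Djstar j a')"
proof (rule bij_betw_byWitness[where f' = "\<lambda>\<pi>. remove_fixpoint (block_fixpoint \<pi>) \<pi>"])
  show "\<forall>\<pi>\<in>Dj j a. remove_fixpoint (block_fixpoint (insert_fixpoint (insertion_point \<pi>) \<pi>))
                      (insert_fixpoint (insertion_point \<pi>) \<pi>) = \<pi>"
    by (simp add: block_fixpoint_insert_fixpoint)
  show "\<forall>\<pi>\<in>Djstar j a'. insert_fixpoint (insertion_point (remove_fixpoint (block_fixpoint \<pi>) \<pi>))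
                          (remove_fixpoint (block_fixpoint \<pi>) \<pi>) = \<pi>"
  proof
    fix \<pi>
    assume D: "\<pi> \<in> Djstar j a'"
    then have "inj \<pi>" by (auto simp: Djstar_def Sa_def intro: permutes_inj)
    then show "insert_fixpoint (insertion_point (remove_fixpoint (block_fixpoint \<pi>) \<pi>))
                 (remove_fixpoint (block_fixpoint \<pi>) \<pi>) = \<pi>"
      using insert_remove_fixpoint block_fixpoint_Djstar(2)[OF D]
      by (simp add: insertion_point_remove_fixpoint[OF D])
  qed
qed (use insert_fixpoint_Djstar remove_fixpoint_Dj in auto)

end

theorem mainTheorem8:
  fixes a :: "nat list" and j :: nat
  assumes "1 \<le> j" and "j \<le> length a"
  shows "\<exists>f. bij_betw f (Dj j a) (Djstar j (a[j - 1 := a ! (j - 1) + 1]))"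
proof -
  interpret enlarged_block a j using assms by unfold_locales
  show ?thesis using bij_betw_insert_fixpoint by blast
qed

end
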